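(* Let $A=(Q,\Sigma,\delta,q_0,F)$ be a minimal poNFA (i.e., no poNFA with fewer states accepts $L(A)$). Then $L({}_{q_1}A)\neq L({}_{q_2}A)$ for all distinct states $q_1,q_2\in Q$, where ${}_qA=(Q,\Sigma,\delta,q,F)$.
   Context: NFAs have a single initial state and no $\varepsilon$-transitions. For an NFA with transition function $\delta$, write $p\leq q$ if $q\in\delta(p,w)$ for some word $w$; the NFA is a poNFA (partially ordered NFA) if $\leq$ is a partial order on its states. *)

theory Defs
  imports Main
begin

record ('s, 'a) nfa =
  states   :: "'s set"
  alphabet :: "'a set"
  trans    :: "'s \<Rightarrow> 'a \<Rightarrow> 's set"
  init     :: 's
  final    :: "'s set"

definition wf_nfa :: "('s, 'a) nfa \<Rightarrow> bool" where
  "wf_nfa A \<longleftrightarrow> finite (states A) \<and> finite (alphabet A) \<and> init A \<in> states A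
     \<and> final A \<subseteq> states A
     \<and> (\<forall>q\<in>states A. \<forall>a\<in>alphabet A. trans A q a \<subseteq> states A)"

fun delta_star :: "('s, 'a) nfa \<Rightarrow> 's \<Rightarrow> 'a list \<Rightarrow> 's set" where
  "delta_star A p [] = {p}"
| "delta_star A p (a # w) = (\<Union>q\<in>trans A p a. delta_star A q w)"

definition lang :: "('s, 'a) nfa \<Rightarrow> 'a list set" where
  "lang A = {w. set w \<subseteq> alphabet A \<and> delta_star A (init A) w \<inter> final A \<noteq> {}}"

definition reach :: "('s, 'a) nfa \<Rightarrow> 's \<Rightarrow> 's \<Rightarrow> bool" where
  "reach A p q \<longleftrightarrow> (\<exists>w. set w \<subseteq> alphabet A \<and> q \<in> delta_star A p w)"

definition poNFA :: "('s, 'a) nfa \<Rightarrow> bool" where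
  "poNFA A \<longleftrightarrow> wf_nfa A \<and> partial_order_on (states A) {(p, q). p \<in> states A \<and> q \<in> states A \<and> reach A p q}"

definition minimal_poNFA :: "('s, 'a) nfa \<Rightarrow> bool" where
  "minimal_poNFA A \<longleftrightarrow> poNFA A \<and>
     (\<forall>B :: ('s, 'a) nfa. poNFA B \<and> alphabet B = alphabet A \<and> lang B = lang A
        \<longrightarrow> card (states A) \<le> card (states B))"

end

theory Submission
  imports Defs
begin

text \<open>Two distinct states q1, q2 with the same language cannot reach each other in both
directions, say q2 does not reach q1. Merge q1 into q2: delete q1 and redirect every transition
into q1 to q2. Since q1 and q2 accept the same words, every remaining state accepts the same words
as before. A path of the merged automaton from p to r through a redirected transition yields
p \<le> q1 and q2 \<le> r in the original order, so a cycle through it would give q2 \<le> q1; hence the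
merged automaton is again a poNFA, with one state fewer and the same language, contradicting
minimality.\<close>

lemma delta_star_append:
  "delta_star A p (u @ v) = (\<Union>q\<in>delta_star A p u. delta_star A q v)"
  by (induction u arbitrary: p) auto

lemma delta_star_update_init [simp]: "delta_star (A\<lparr>init := q\<rparr>) = delta_star A"
proof (intro ext)
  fix p w
  show "delta_star (A\<lparr>init := q\<rparr>) p w = delta_star A p w"
    by (induction w arbitrary: p) auto
qed

definition accepts :: "('s, 'a) nfa \<Rightarrow> 's \<Rightarrow> 'a list \<Rightarrow> bool" where
  "accepts A q w \<longleftrightarrow> delta_star A q w \<inter> final A \<noteq> {}"

lemma accepts_Nil [simp]: "accepts A q [] \<longleftrightarrow> q \<in> final A"
  by (simp add: accepts_def)

lemma accepts_Cons [simp]: "accepts A q (a # w) \<longleftrightarrow> (\<exists>r\<in>trans A q a. accepts A r w)"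
  by (auto simp: accepts_def)

lemma accepts_update_init [simp]: "accepts (A\<lparr>init := q\<rparr>) = accepts A"
  by (simp add: accepts_def fun_eq_iff)

lemma lang_eq_accepts: "lang A = {w. set w \<subseteq> alphabet A \<and> accepts A (init A) w}"
  by (simp add: lang_def accepts_def)

lemma lang_update_init:
  "lang (A\<lparr>init := q\<rparr>) = {w. set w \<subseteq> alphabet A \<and> accepts A q w}"
  by (simp add: lang_eq_accepts)

lemma reach_refl: "reach A p p"
  unfolding reach_def by (auto intro: exI[of _ "[]"])

lemma reach_trans:
  assumes "reach A p q" and "reach A q r"
  shows "reach A p r"
proof -
  obtain u where u: "set u \<subseteq> alphabet A" "q \<in> delta_star A p u"
    using assms(1) by (auto simp: reach_def)
  obtain v where v: "set v \<subseteq> alphabet A" "r \<in> delta_star A q v"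
    using assms(2) by (auto simp: reach_def)
  have "r \<in> delta_star A p (u @ v)"
    using u v by (auto simp: delta_star_append)
  with u v show ?thesis
    unfolding reach_def by (intro exI[of _ "u @ v"]) auto
qed

lemma reach_trans_step:
  assumes "a \<in> alphabet A" and "r \<in> trans A p a"
  shows "reach A p r"
  using assms unfolding reach_def by (intro exI[of _ "[a]"]) auto

lemma poNFA_iff_antisym:
  "poNFA A \<longleftrightarrow> wf_nfa A \<and>
     (\<forall>p\<in>states A. \<forall>q\<in>states A. reach A p q \<longrightarrow> reach A q p \<longrightarrow> p = q)"
proof -
  let ?R = "{(p, q). p \<in> states A \<and> q \<in> states A \<and> reach A p q}"
  have "preorder_on (states A) ?R"
    unfolding preorder_on_def refl_on_def
    by (auto simp: reach_refl intro: transI reach_trans)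
  then show ?thesis
    unfolding poNFA_def partial_order_on_def antisym_def by blast
qed

definition merge_state :: "('s, 'a) nfa \<Rightarrow> 's \<Rightarrow> 's \<Rightarrow> ('s, 'a) nfa" where
  "merge_state A q1 q2 = A\<lparr>states := states A - {q1},
     trans := (\<lambda>q a. id(q1 := q2) ` trans A q a),
     init := (id(q1 := q2)) (init A),
     final := final A - {q1}\<rparr>"

lemma merge_state_simps [simp]:
  "states (merge_state A q1 q2) = states A - {q1}"
  "alphabet (merge_state A q1 q2) = alphabet A"
  "trans (merge_state A q1 q2) q a = id(q1 := q2) ` trans A q a"
  "init (merge_state A q1 q2) = (id(q1 := q2)) (init A)"
  "final (merge_state A q1 q2) = final A - {q1}"
  by (simp_all add: merge_state_def)

lemma wf_nfa_merge_state:
  assumes "wf_nfa A" and "q2 \<in> states A" and "q1 \<noteq> q2"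
  shows "wf_nfa (merge_state A q1 q2)"
  using assms unfolding wf_nfa_def by auto

lemma card_merge_state_less:
  assumes "finite (states A)" and "q1 \<in> states A"
  shows "card (states (merge_state A q1 q2)) < card (states A)"
  unfolding merge_state_simps(1) using assms by (rule card_Diff1_less)

lemma accepts_merge_state:
  assumes "q1 \<noteq> q2" and "q \<noteq> q1" and "set w \<subseteq> alphabet A"
    and "lang (A\<lparr>init := q1\<rparr>) = lang (A\<lparr>init := q2\<rparr>)"
  shows "accepts (merge_state A q1 q2) q w \<longleftrightarrow> accepts A q w"
  using assms(2,3)
proof (induction w arbitrary: q)
  case Nil
  then show ?case by simp
next
  case (Cons a w)
  have "accepts A q2 w \<longleftrightarrow> accepts A q1 w"
    using assms(4) Cons.prems(2) by (auto simp: lang_update_init)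
  then have "accepts (merge_state A q1 q2) ((id(q1 := q2)) r) w \<longleftrightarrow> accepts A r w" for r
    using Cons.IH Cons.prems(2) assms(1) by (cases "r = q1") auto
  then show ?case
    by (simp only: accepts_Cons merge_state_simps(3) bex_simps(7))
qed

lemma lang_merge_state:
  assumes "q1 \<noteq> q2" and "lang (A\<lparr>init := q1\<rparr>) = lang (A\<lparr>init := q2\<rparr>)"
  shows "lang (merge_state A q1 q2) = lang A"
proof -
  let ?q = "(id(q1 := q2)) (init A)"
  have "?q \<noteq> q1"
    using assms(1) by simp
  have "lang (merge_state A q1 q2) = {w. set w \<subseteq> alphabet A \<and> accepts (merge_state A q1 q2) ?q w}"
    by (simp only: lang_eq_accepts merge_state_simps(2,4))
  also have "\<dots> = {w. set w \<subseteq> alphabet A \<and> accepts A ?q w}"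
    using accepts_merge_state[OF assms(1) \<open>?q \<noteq> q1\<close> _ assms(2)] by blast
  also have "\<dots> = lang A"
    using assms(2) by (cases "init A = q1") (auto simp: lang_eq_accepts lang_update_init)
  finally show ?thesis .
qed

lemma reach_merge_state:
  assumes "reach (merge_state A q1 q2) p r"
  shows "reach A p r \<or> (reach A p q1 \<and> reach A q2 r)"
proof -
  obtain w where "set w \<subseteq> alphabet A" and "r \<in> delta_star (merge_state A q1 q2) p w"
    using assms by (auto simp: reach_def)
  then show ?thesis
  proof (induction w arbitrary: p)
    case Nil
    then show ?case by (simp add: reach_refl)
  next
    case (Cons a w)
    then obtain t where a: "a \<in> alphabet A" and w: "set w \<subseteq> alphabet A"
      and t: "t \<in> trans A p a"
      and "r \<in> delta_star (merge_state A q1 q2) ((id(q1 := q2)) t) w"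
      by auto
    with Cons.IH have IH: "reach A ((id(q1 := q2)) t) r \<or>
        (reach A ((id(q1 := q2)) t) q1 \<and> reach A q2 r)"
      by blast
    have "reach A p t"
      using a t by (rule reach_trans_step)
    with IH show ?case
      by (cases "t = q1") (auto intro: reach_trans)
  qed
qed

lemma poNFA_merge_state:
  assumes "poNFA A" and "q2 \<in> states A" and "q1 \<noteq> q2" and "\<not> reach A q2 q1"
  shows "poNFA (merge_state A q1 q2)"
  unfolding poNFA_iff_antisym
proof (intro conjI ballI impI)
  show "wf_nfa (merge_state A q1 q2)"
    using assms(1-3) by (simp add: poNFA_iff_antisym wf_nfa_merge_state)
next
  fix p r
  assume "p \<in> states (merge_state A q1 q2)" and "r \<in> states (merge_state A q1 q2)"
    and "reach (merge_state A q1 q2) p r" and "reach (merge_state A q1 q2) r p"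
  moreover have "reach A p r \<and> reach A r p"
    using reach_merge_state[OF \<open>reach _ p r\<close>] reach_merge_state[OF \<open>reach _ r p\<close>]
      assms(4) by (meson reach_trans)
  ultimately show "p = r"
    using assms(1) by (auto simp: poNFA_iff_antisym)
qed

lemma minimal_poNFA_equivalent_states_reach:
  fixes A :: "('s, 'a) nfa"
  assumes "minimal_poNFA A" and "q1 \<in> states A" and "q2 \<in> states A" and "q1 \<noteq> q2"
    and "lang (A\<lparr>init := q1\<rparr>) = lang (A\<lparr>init := q2\<rparr>)"
  shows "reach A q2 q1"
proof (rule ccontr)
  assume "\<not> reach A q2 q1"
  have po: "poNFA A"
    and smallest: "\<And>B :: ('s, 'a) nfa. poNFA B \<Longrightarrow> alphabet B = alphabet A \<Longrightarrow> lang B = lang A \<Longrightarrow>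
                       card (states A) \<le> card (states B)"
    using assms(1) unfolding minimal_poNFA_def by blast+
  have fin: "finite (states A)"
    using po by (simp add: poNFA_def wf_nfa_def)
  have "card (states A) \<le> card (states (merge_state A q1 q2))"
    using poNFA_merge_state[OF po assms(3,4) \<open>\<not> reach A q2 q1\<close>] lang_merge_state[OF assms(4,5)]
    by (intro smallest) simp_all
  with card_merge_state_less[OF fin assms(2)] show False
    by simp
qed

theorem lemma12:
  fixes A :: "('s, 'a) nfa"
  assumes "minimal_poNFA A"
    and "q1 \<in> states A" and "q2 \<in> states A" and "q1 \<noteq> q2"
  shows "lang (A\<lparr>init := q1\<rparr>) \<noteq> lang (A\<lparr>init := q2\<rparr>)"
proof
  assume eq: "lang (A\<lparr>init := q1\<rparr>) = lang (A\<lparr>init := q2\<rparr>)"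
  have "reach A q2 q1" and "reach A q1 q2"
    using minimal_poNFA_equivalent_states_reach[OF assms eq]
      minimal_poNFA_equivalent_states_reach[OF assms(1,3,2) assms(4)[symmetric] eq[symmetric]]
    by auto
  with assms show False
    by (auto simp: minimal_poNFA_def poNFA_iff_antisym)
qed

end
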